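(* Let $d\ge2$ and $\epsilon>0$, and let $\alpha=(\alpha_1,\dots,\alpha_d)\in\mathbb{R}^d$ satisfy: (i) $(\alpha_1,\dots,\alpha_{d-1})\in\mathcal{B}_{d-1,1}$; (ii) $\alpha_d/\alpha_1\in\mathcal{E}(q\mapsto q^{-(2d-1+\epsilon)})\cap(0,1/2)$; (iii) the numbers $1,\alpha_1,\dots,\alpha_d$ are linearly independent over $\mathbb{Q}$. Let $L_1(n)=\sum_{j=1}^d\alpha_jn_j$ and $\Omega'=\{x\in(0,1]^d:x_d+2x_1\le1\}$, and for $r>0$ set \[\mathcal{A}(r)=\{L_1(n)\bmod 1:n\in r\Omega'\cap\mathbb{Z}^d\}\subseteq\mathbb{R}/\mathbb{Z}.\] Then there is a constant $C>0$ and an unbounded set of $r>0$ such that, for each such $r$, the number of distinct distances between consecutive elements of $\mathcal{A}(r)$ (arranged in cyclic order on the circle $\mathbb{R}/\mathbb{Z}$) is greater than $Cr^{\epsilon/(d+\epsilon)}$.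
   Context: For $x\in\mathbb{R}^m$, $|x|=\max_i|x_i|$, and $\|x\|$ is the distance from $x$ to the nearest integer (for real $x$). $\mathcal{B}_{d-1,1}$ is the set of $(a_1,\dots,a_{d-1})\in\mathbb{R}^{d-1}$ for which there is $C>0$ with $\|\sum_{j=1}^{d-1}a_jn_j\|\ge C/|n|^{d-1}$ for all $n\in\mathbb{Z}^{d-1}\setminus\{0\}$. For $\psi:\mathbb{N}\to[0,\infty)$, $\mathcal{E}(\psi)$ (in dimension one) is the set of $x\in[0,1)$ for which $\|nx\|\le\psi(|n|)$ holds for infinitely many integers $n$. *)

theory Defs
  imports Complex_Main
begin

definition dnint :: "real \<Rightarrow> real" where
  "dnint x = \<bar>x - of_int (round x)\<bar>"

definition supnorm :: "nat \<Rightarrow> (nat \<Rightarrow> int) \<Rightarrow> int" where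
  "supnorm m n = Max ((\<lambda>j. \<bar>n j\<bar>) ` {1..m})"

definition Bad_lin :: "nat \<Rightarrow> (nat \<Rightarrow> real) set" where
  "Bad_lin m = {a. \<exists>C>0. \<forall>n::nat \<Rightarrow> int. (\<exists>j\<in>{1..m}. n j \<noteq> 0) \<longrightarrow>
       dnint (\<Sum>j=1..m. a j * of_int (n j)) \<ge> C / (of_int (supnorm m n)) ^ m}"

definition Eset :: "(nat \<Rightarrow> real) \<Rightarrow> real set" where
  "Eset \<psi> = {x. 0 \<le> x \<and> x < 1 \<and> infinite {n::int. dnint (of_int n * x) \<le> \<psi> (nat \<bar>n\<bar>)}}"

text \<open>A(r) = {L_1(n) mod 1 : n in r Omega' intersected with Z^d}, represented in [0,1).\<close>
definition Aset :: "nat \<Rightarrow> (nat \<Rightarrow> real) \<Rightarrow> real \<Rightarrow> real set" where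
  "Aset d \<alpha> r = {frac (\<Sum>j=1..d. \<alpha> j * of_int (n j)) | n :: nat \<Rightarrow> int.
       (\<forall>j\<in>{1..d}. 0 < n j \<and> of_int (n j) \<le> r) \<and> of_int (n d + 2 * n 1) \<le> r}"

text \<open>Distances between cyclically consecutive elements of a finite set A in [0,1)
  on the circle R/Z (including the wrap-around gap).\<close>
definition cyc_gaps :: "real set \<Rightarrow> real set" where
  "cyc_gaps A = {b - a | a b. a \<in> A \<and> b \<in> A \<and> a < b \<and> \<not> (\<exists>c\<in>A. a < c \<and> c < b)}
     \<union> (if A = {} then {} else {1 + Min A - Max A})"

end

theory Submission
  imports Defs "HOL-Library.FuncSet" "HOL-Library.Infinite_Set"
begin

text \<open>
  Choose \<open>p/q\<close> with \<open>q \<le> Q\<close> and \<open>|q \<alpha>\<^sub>d - p \<alpha>\<^sub>1| \<le> |\<alpha>\<^sub>1| Q^-(2d - 1 + \<epsilon>)\<close>, put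
  \<open>w = (-p, 0, \<dots>, 0, q)\<close>, \<open>\<eta> = L(w)\<close>, and work at the scale \<open>r = \<kappa> Q^(1 + \<epsilon>/d)\<close>.
  Bad approximability of \<open>(\<alpha>\<^sub>1, \<dots>, \<alpha>\<^sub>d\<^sub>-\<^sub>1)\<close> shows that the only integer vectors \<open>u\<close>
  with \<open>|u| < r\<close> and \<open>\<parallel>L(u)\<parallel> \<le> |\<eta>|\<close> are the multiples of \<open>w\<close>. Hence the neighbour of
  \<open>L(1, \<dots>, 1, t)\<close> on the side of \<open>sgn \<eta>\<close> is \<open>L(m)\<close> for a point \<open>m\<close> with \<open>m\<^sub>d \<le> q\<close>,
  since otherwise \<open>m - w\<close> would be nearer. By linear independence the gaps so obtained
  for \<open>t = 1 + k q\<close>, \<open>k < (r - 4)/q\<close>, are pairwise distinct: at least \<open>(r - 4)/Q\<close>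
  gaps, which is of order \<open>Q^(\<epsilon>/d) = r^(\<epsilon>/(d + \<epsilon>))\<close> up to constants.
\<close>

lemma dnint_le: "dnint x \<le> \<bar>x - of_int k\<bar>"
  unfolding dnint_def by (rule round_diff_minimal)

lemma dnint_le_half: "dnint x \<le> 1/2"
  unfolding dnint_def using of_int_round_abs_le[of x] by linarith

lemma dnint_le_frac: "dnint x \<le> frac x"
  using dnint_le[of x "\<lfloor>x\<rfloor>"] unfolding frac_def by simp

lemma dnint_minus: "dnint (- x) = dnint x"
proof -
  have "dnint (- x) \<le> dnint x" using dnint_le[of "- x" "- round x"] unfolding dnint_def by simp
  moreover have "dnint x \<le> dnint (- x)" using dnint_le[of x "- round (- x)"] unfolding dnint_def by simp
  ultimately show ?thesis by linarith
qed

lemma dnint_int_mult_le: "dnint (of_int k * x) \<le> \<bar>of_int k\<bar> * dnint x"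
  using dnint_le[of "of_int k * x" "k * round x"] unfolding dnint_def
  by (simp add: abs_mult[symmetric] algebra_simps)

lemma dnint_add_le: "dnint (x + y) \<le> dnint x + \<bar>y\<bar>"
  using dnint_le[of "x + y" "round x"] unfolding dnint_def by linarith

lemma supnorm_ge: "j \<in> {1..m} \<Longrightarrow> \<bar>n j\<bar> \<le> supnorm m n"
  unfolding supnorm_def by (intro Max_ge) auto

lemma supnorm_le:
  assumes "m \<ge> 1" "\<And>j. j \<in> {1..m} \<Longrightarrow> of_int \<bar>n j\<bar> \<le> (B :: real)"
  shows "of_int (supnorm m n) \<le> B"
proof -
  have "supnorm m n \<in> (\<lambda>j. \<bar>n j\<bar>) ` {1..m}"
    unfolding supnorm_def using assms(1) by (intro Max_in) auto
  then show ?thesis using assms(2) by auto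
qed

lemma cyc_gaps_succ:
  assumes A: "finite A" "A \<subseteq> {0..<1}" and ab: "a \<in> A" "b \<in> A" "b \<noteq> a"
    and least: "\<And>c. c \<in> A \<Longrightarrow> c \<noteq> a \<Longrightarrow> frac (b - a) \<le> frac (c - a)"
  shows "frac (b - a) \<in> cyc_gaps A"
proof -
  have unit: "0 \<le> x \<and> x < 1" if "x \<in> A" for x using A(2) that by auto
  have frac_pos: "frac (y - x) = y - x" if "x \<in> A" "y \<in> A" "x \<le> y" for x y
    using unit[OF that(1)] unit[OF that(2)] that(3) by (intro frac_eq_id) auto
  have frac_neg: "frac (y - x) = y - x + 1" if "x \<in> A" "y \<in> A" "y < x" for x y
    using unit[OF that(1)] unit[OF that(2)] that(3) by (subst frac_unique_iff) auto
  show ?thesis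
  proof (cases "a < b")
    case True
    have "\<not> (\<exists>c\<in>A. a < c \<and> c < b)"
    proof
      assume "\<exists>c\<in>A. a < c \<and> c < b"
      then obtain c where c: "c \<in> A" "a < c" "c < b" by blast
      with least[of c] frac_pos[OF ab(1) c(1)] frac_pos[OF ab(1,2)] True show False by auto
    qed
    then show ?thesis
      unfolding cyc_gaps_def using ab True frac_pos[OF ab(1,2)] by auto
  next
    case False
    then have ba: "b < a" using ab by auto
    have "Max A = a"
    proof (rule Max_eqI[OF A(1) _ ab(1)])
      fix c assume c: "c \<in> A"
      show "c \<le> a"
      proof (rule ccontr)
        assume "\<not> c \<le> a"
        then show False
          using least[OF c] frac_pos[OF ab(1) c] frac_neg[OF ab(1,2) ba] unit[OF c] unit[OF ab(2)]
          by auto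
      qed
    qed
    moreover have "Min A = b"
    proof (rule Min_eqI[OF A(1) _ ab(2)])
      fix c assume c: "c \<in> A"
      show "b \<le> c"
      proof (rule ccontr)
        assume "\<not> b \<le> c"
        then show False
          using least[OF c] frac_neg[OF ab(1) c] frac_neg[OF ab(1,2) ba] ba by auto
      qed
    qed
    ultimately show ?thesis
      unfolding cyc_gaps_def using ab frac_neg[OF ab(1,2) ba] by auto
  qed
qed

lemma cyc_gaps_pred:
  assumes A: "finite A" "A \<subseteq> {0..<1}" and ab: "a \<in> A" "b \<in> A" "b \<noteq> a"
    and least: "\<And>c. c \<in> A \<Longrightarrow> c \<noteq> b \<Longrightarrow> frac (b - a) \<le> frac (b - c)"
  shows "frac (b - a) \<in> cyc_gaps A"
proof (rule cyc_gaps_succ[OF A ab])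
  fix c assume c: "c \<in> A" "c \<noteq> a"
  show "frac (b - a) \<le> frac (c - a)"
  proof (cases "c = b")
    case False
    have "frac (c - a) \<noteq> 0"
    proof
      assume "frac (c - a) = 0"
      then obtain k :: int where k: "c - a = of_int k" by (auto simp: frac_eq_0_iff elim: Ints_cases)
      have "c \<in> {0..<1}" "a \<in> {0..<1}" using c(1) ab(1) A(2) by auto
      then have "\<bar>c - a\<bar> < 1" by auto
      with k have "k = 0" by linarith
      with k c(2) show False by simp
    qed
    then have pos: "0 < frac (c - a)" using frac_ge_0[of "c - a"] by linarith
    have sum: "frac (b - a) = frac ((b - c) + (c - a))" by simp
    \<comment> \<open>going from a to b via c overshoots b by a full turn\<close>
    have "\<not> frac (b - c) + frac (c - a) < 1"
    proof
      assume "frac (b - c) + frac (c - a) < 1"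
      then have "frac (b - a) = frac (b - c) + frac (c - a)" unfolding sum frac_add by simp
      with least[OF c(1) False] pos show False by linarith
    qed
    then have "frac (b - a) = frac (b - c) + frac (c - a) - 1" unfolding sum frac_add by simp
    then show ?thesis using frac_lt_1[of "b - c"] by linarith
  qed simp
qed

lemma cyc_gaps_nearest:
  fixes \<sigma> :: real
  assumes A: "finite A" "A \<subseteq> {0..<1}" "a \<in> A" "c\<^sub>0 \<in> A" "c\<^sub>0 \<noteq> a"
    and \<sigma>: "\<sigma> = 1 \<or> \<sigma> = -1"
  obtains b where "b \<in> A" "b \<noteq> a" "frac (\<sigma> * (b - a)) \<in> cyc_gaps A"
    "\<And>c. c \<in> A \<Longrightarrow> c \<noteq> a \<Longrightarrow> frac (\<sigma> * (b - a)) \<le> frac (\<sigma> * (c - a))"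
proof -
  let ?f = "\<lambda>c. frac (\<sigma> * (c - a))"
  have "Min (?f ` (A - {a})) \<in> ?f ` (A - {a})"
    using A by (intro Min_in) auto
  then obtain b where b: "b \<in> A" "b \<noteq> a" "?f b = Min (?f ` (A - {a}))"
    by (metis (no_types, lifting) DiffE imageE insertCI)
  have least: "?f b \<le> ?f c" if "c \<in> A" "c \<noteq> a" for c
    using b(3) A(1) that by simp
  from \<sigma> have "?f b \<in> cyc_gaps A"
  proof
    assume "\<sigma> = 1"
    then show ?thesis using cyc_gaps_succ[OF A(1,2,3) b(1,2)] least by simp
  next
    assume "\<sigma> = -1"
    then show ?thesis using cyc_gaps_pred[OF A(1,2) b(1) A(3) b(2)[symmetric]] least by simp
  qed
  from that[OF b(1,2) this least] show ?thesis .
qed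

lemma finite_cyc_gaps: "finite A \<Longrightarrow> finite (cyc_gaps A)"
proof -
  assume "finite A"
  then have "finite ((\<lambda>(a, b). b - a) ` (A \<times> A))" by simp
  moreover have "{b - a | a b. a \<in> A \<and> b \<in> A \<and> a < b \<and> \<not> (\<exists>c\<in>A. a < c \<and> c < b)}
      \<subseteq> (\<lambda>(a, b). b - a) ` (A \<times> A)" by auto
  ultimately have "finite {b - a | a b. a \<in> A \<and> b \<in> A \<and> a < b \<and> \<not> (\<exists>c\<in>A. a < c \<and> c < b)}"
    by (rule finite_subset[rotated])
  then show ?thesis unfolding cyc_gaps_def by simp
qed

definition lin_form :: "nat \<Rightarrow> (nat \<Rightarrow> real) \<Rightarrow> (nat \<Rightarrow> int) \<Rightarrow> real" where
  "lin_form d \<alpha> n = (\<Sum>j=1..d. \<alpha> j * of_int (n j))"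

definition in_region :: "nat \<Rightarrow> real \<Rightarrow> (nat \<Rightarrow> int) \<Rightarrow> bool" where
  "in_region d r n \<longleftrightarrow> (\<forall>j\<in>{1..d}. 0 < n j \<and> of_int (n j) \<le> r) \<and> of_int (n d + 2 * n 1) \<le> r"

definition rat_independent :: "nat \<Rightarrow> (nat \<Rightarrow> real) \<Rightarrow> bool" where
  "rat_independent d \<alpha> \<longleftrightarrow> (\<forall>(c\<^sub>0::rat) c. of_rat c\<^sub>0 + (\<Sum>j=1..d. of_rat (c j) * \<alpha> j) = 0 \<longrightarrow>
      c\<^sub>0 = 0 \<and> (\<forall>j\<in>{1..d}. c j = 0))"

definition approx_vector :: "nat \<Rightarrow> int \<Rightarrow> int \<Rightarrow> nat \<Rightarrow> int" where
  "approx_vector d p q = (\<lambda>j. if j = 1 then - p else if j = d then q else 0)"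

definition base_point :: "nat \<Rightarrow> int \<Rightarrow> nat \<Rightarrow> int" where
  "base_point d t = (\<lambda>j. if j = d then t else 1)"

lemma Aset_eq_image: "Aset d \<alpha> r = (\<lambda>n. frac (lin_form d \<alpha> n)) ` Collect (in_region d r)"
  unfolding Aset_def lin_form_def in_region_def by auto

lemma lin_form_diff: "lin_form d \<alpha> (\<lambda>j. m j - n j) = lin_form d \<alpha> m - lin_form d \<alpha> n"
  by (simp add: lin_form_def sum_subtractf algebra_simps)

lemma lin_form_scale: "lin_form d \<alpha> (\<lambda>j. k * n j) = of_int k * lin_form d \<alpha> n"
  by (simp add: lin_form_def sum_distrib_left algebra_simps)

lemma lin_form_cong: "(\<And>j. j \<in> {1..d} \<Longrightarrow> m j = n j) \<Longrightarrow> lin_form d \<alpha> m = lin_form d \<alpha> n"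
  unfolding lin_form_def by (rule sum.cong) auto

lemma lin_form_approx_vector:
  assumes "d \<ge> 2"
  shows "lin_form d \<alpha> (approx_vector d p q) = of_int q * \<alpha> d - of_int p * \<alpha> 1"
proof -
  have "lin_form d \<alpha> (approx_vector d p q)
      = (\<Sum>j=1..d. (if j = 1 then - (of_int p * \<alpha> 1) else 0) + (if j = d then of_int q * \<alpha> d else 0))"
    unfolding lin_form_def approx_vector_def by (rule sum.cong) (use assms in auto)
  also have "\<dots> = of_int q * \<alpha> d - of_int p * \<alpha> 1"
    using assms by (simp add: sum.distrib)
  finally show ?thesis .
qed

lemma lin_form_Ints_imp_zero:
  assumes "rat_independent d \<alpha>" "lin_form d \<alpha> u \<in> \<int>"
  shows "\<forall>j\<in>{1..d}. u j = 0"
proof -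
  obtain k where "lin_form d \<alpha> u = of_int k" using assms(2) by (auto elim: Ints_cases)
  then have "of_rat (- of_int k) + (\<Sum>j=1..d. of_rat (of_int (u j)) * \<alpha> j) = 0"
    unfolding lin_form_def by (simp add: mult.commute of_rat_minus)
  then show ?thesis using assms(1) unfolding rat_independent_def by fastforce
qed

lemma frac_lin_form_eqD:
  assumes "rat_independent d \<alpha>" "frac (lin_form d \<alpha> m) = frac (lin_form d \<alpha> n)"
  shows "\<forall>j\<in>{1..d}. m j = n j"
proof -
  have "lin_form d \<alpha> m - lin_form d \<alpha> n \<in> \<int>"
    using assms(2) by (metis frac_diff_eq frac_eq_0_iff)
  then show ?thesis
    using lin_form_Ints_imp_zero[OF assms(1), of "\<lambda>j. m j - n j"] by (simp add: lin_form_diff)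
qed

lemma finite_Aset: "finite (Aset d \<alpha> r)"
proof -
  let ?P = "PiE {1..d} (\<lambda>_. {0..\<lfloor>r\<rfloor>})"
  have "Aset d \<alpha> r \<subseteq> (\<lambda>n. frac (lin_form d \<alpha> n)) ` ?P"
  proof
    fix x assume "x \<in> Aset d \<alpha> r"
    then obtain n where n: "in_region d r n" "x = frac (lin_form d \<alpha> n)"
      unfolding Aset_eq_image by auto
    have "restrict n {1..d} \<in> ?P"
      using n(1) unfolding in_region_def by (auto simp: PiE_def le_floor_iff)
    moreover have "lin_form d \<alpha> (restrict n {1..d}) = lin_form d \<alpha> n"
      by (rule lin_form_cong) auto
    ultimately show "x \<in> (\<lambda>n. frac (lin_form d \<alpha> n)) ` ?P" using n(2) by (metis image_eqI)
  qed
  moreover have "finite ?P" by (intro finite_PiE) auto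
  ultimately show ?thesis by (meson finite_imageI finite_subset)
qed

lemma Aset_subset: "Aset d \<alpha> r \<subseteq> {0..<1}"
  unfolding Aset_eq_image using frac_lt_1 by auto

lemma in_region_base_point:
  "d \<ge> 2 \<Longrightarrow> 1 \<le> t \<Longrightarrow> of_int t + 2 \<le> r \<Longrightarrow> in_region d r (base_point d t)"
  unfolding in_region_def base_point_def by auto

lemma in_region_minus_approx_vector:
  assumes "d \<ge> 2" "0 \<le> p" "2 * p \<le> q" "in_region d r m" "q < m d"
  shows "in_region d r (\<lambda>j. m j - approx_vector d p q j)"
proof -
  have "of_int (m d + 2 * m 1) \<le> r" using assms(4) unfolding in_region_def by auto
  then have "real_of_int (m d - q) + 2 * real_of_int (m 1 + p) \<le> r" using assms(3) by simp
  then show ?thesis using assms unfolding in_region_def approx_vector_def by auto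
qed

lemma in_region_diff_bound:
  assumes "in_region d r m" "in_region d r n" "j \<in> {1..d}"
  shows "\<bar>of_int (m j - n j)\<bar> < r"
  using assms unfolding in_region_def by force

definition bad_approx_const :: "nat \<Rightarrow> (nat \<Rightarrow> real) \<Rightarrow> real \<Rightarrow> bool" where
  "bad_approx_const m a C \<longleftrightarrow> (\<forall>n::nat \<Rightarrow> int. (\<exists>j\<in>{1..m}. n j \<noteq> 0) \<longrightarrow>
      dnint (\<Sum>j=1..m. a j * of_int (n j)) \<ge> C / of_int (supnorm m n) ^ m)"

lemma Bad_lin_iff: "a \<in> Bad_lin m \<longleftrightarrow> (\<exists>C>0. bad_approx_const m a C)"
  unfolding Bad_lin_def bad_approx_const_def by simp

lemma bad_approx_const_le_half:
  assumes "m \<ge> 1" "bad_approx_const m a C"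
  shows "C \<le> 1/2"
proof -
  have "supnorm m (\<lambda>_. 1) = 1"
    unfolding supnorm_def using assms(1) by (simp add: image_constant_conv)
  moreover have "\<exists>j\<in>{1..m}. (1::int) \<noteq> 0" using assms(1) by auto
  ultimately have "C \<le> dnint (\<Sum>j=1..m. a j * of_int 1)"
    using assms(2)[unfolded bad_approx_const_def, rule_format, of "\<lambda>_. 1"] by simp
  then show ?thesis using dnint_le_half order_trans by blast
qed

lemma multiple_of_approx_vector:
  fixes p q :: int
  assumes "d \<ge> 2" "coprime p q" "q \<noteq> 0"
    and "q * u 1 + p * u d = 0" "\<And>j. j \<in> {2..<d} \<Longrightarrow> u j = 0"
  shows "\<exists>k. \<forall>j\<in>{1..d}. u j = k * approx_vector d p q j"
proof -
  have "q dvd p * u d" using assms(4) by (metis add_eq_0_iff dvd_minus_iff dvd_triv_left)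
  then have "q dvd u d" using assms(2) by (simp add: coprime_commute coprime_dvd_mult_right_iff)
  then obtain k where k: "u d = q * k" by (auto elim: dvdE)
  have "q * u 1 = q * (- p * k)" using assms(4) k by (simp add: algebra_simps)
  then have "u 1 = - p * k" using mult_left_cancel[OF assms(3)] by blast
  then have "u j = k * approx_vector d p q j" if "j \<in> {1..d}" for j
    using that k assms(1) assms(5)[of j] unfolding approx_vector_def by auto
  then show ?thesis by blast
qed

lemma lin_form_eliminate_last:
  fixes p q :: int
  assumes d: "d \<ge> 2"
  shows "(\<Sum>j=1..d-1. \<alpha> j * of_int (q * u j + (if j = 1 then p * u d else 0)))
       = of_int q * lin_form d \<alpha> u - of_int (u d) * (of_int q * \<alpha> d - of_int p * \<alpha> 1)"
proof -
  have "{1..d} = insert d {1..d-1}" "(1::nat) \<in> {1..d-1}" using d by auto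
  then have "lin_form d \<alpha> u = (\<Sum>j=1..d-1. \<alpha> j * of_int (u j)) + \<alpha> d * of_int (u d)"
    unfolding lin_form_def using d by simp
  moreover have "(\<Sum>j=1..d-1. \<alpha> j * of_int (q * u j + (if j = 1 then p * u d else 0)))
      = (\<Sum>j=1..d-1. of_int q * (\<alpha> j * of_int (u j)))
        + (\<Sum>j=1..d-1. if j = 1 then \<alpha> 1 * of_int p * of_int (u d) else 0)"
    unfolding sum.distrib[symmetric] by (rule sum.cong) (auto simp: algebra_simps)
  moreover have "(\<Sum>j=1..d-1. if j = 1 then \<alpha> 1 * of_int p * of_int (u d) else 0) = \<alpha> 1 * of_int p * of_int (u d)"
    using \<open>1 \<in> {1..d-1}\<close> by simp
  ultimately show ?thesis by (simp add: sum_distrib_left algebra_simps)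
qed

definition close_only_multiples :: "nat \<Rightarrow> (nat \<Rightarrow> real) \<Rightarrow> int \<Rightarrow> int \<Rightarrow> real \<Rightarrow> bool" where
  "close_only_multiples d \<alpha> p q r \<longleftrightarrow> (\<forall>u. (\<forall>j\<in>{1..d}. \<bar>of_int (u j)\<bar> < r) \<longrightarrow>
      dnint (lin_form d \<alpha> u) \<le> \<bar>lin_form d \<alpha> (approx_vector d p q)\<bar> \<longrightarrow>
      (\<exists>k. \<forall>j\<in>{1..d}. u j = k * approx_vector d p q j))"

text \<open>Clearing the coordinate \<open>n\<^sub>d\<close> from \<open>q L(u)\<close> with the help of
  \<open>\<eta> = q \<alpha>\<^sub>d - p \<alpha>\<^sub>1\<close> leaves a linear form in \<open>\<alpha>\<^sub>1, \<dots>, \<alpha>\<^sub>d\<^sub>-\<^sub>1\<close>,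
  to which bad approximability applies.\<close>
lemma close_points_are_multiples:
  fixes p q :: int
  assumes d: "d \<ge> 2" and bad: "bad_approx_const (d - 1) \<alpha> C"
    and pq: "1 \<le> p" "p \<le> q" "coprime p q"
    and \<eta>: "\<eta> = of_int q * \<alpha> d - of_int p * \<alpha> 1"
    and budget: "(of_int q + r) * \<bar>\<eta>\<bar> * (2 * of_int q * r) ^ (d - 1) < C"
  shows "close_only_multiples d \<alpha> p q r"
  unfolding close_only_multiples_def
proof (intro allI impI)
  fix u :: "nat \<Rightarrow> int"
  assume "\<forall>j\<in>{1..d}. \<bar>of_int (u j)\<bar> < r"
  then have u: "\<And>j. j \<in> {1..d} \<Longrightarrow> \<bar>of_int (u j)\<bar> < r" by blast
  assume "dnint (lin_form d \<alpha> u) \<le> \<bar>lin_form d \<alpha> (approx_vector d p q)\<bar>"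
  then have close: "dnint (lin_form d \<alpha> u) \<le> \<bar>\<eta>\<bar>" unfolding lin_form_approx_vector[OF d] \<eta> .
  define v where "v = (\<lambda>j. q * u j + (if j = 1 then p * u d else 0))"
  show "\<exists>k. \<forall>j\<in>{1..d}. u j = k * approx_vector d p q j"
  proof (cases "\<exists>j\<in>{1..d-1}. v j \<noteq> 0")
    case False
    then have "v 1 = 0" "\<And>j. j \<in> {2..<d} \<Longrightarrow> v j = 0" using d by auto
    then show ?thesis
      using multiple_of_approx_vector[OF d pq(3), of u] pq unfolding v_def by auto
  next
    case True
    then obtain j\<^sub>0 where j\<^sub>0: "j\<^sub>0 \<in> {1..d-1}" "v j\<^sub>0 \<noteq> 0" by blast
    have "\<bar>of_int (u d)\<bar> < r" using u d by simp
    then have r: "r > 0" by (meson abs_ge_zero le_less_trans)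
    have ur: "\<bar>of_int (u j)\<bar> \<le> r" if "j \<in> {1..d}" for j using u[OF that] by simp
    define S where "S = (\<Sum>j=1..d-1. \<alpha> j * of_int (v j))"
    have "S = of_int q * lin_form d \<alpha> u - of_int (u d) * \<eta>"
      unfolding S_def v_def \<eta> by (rule lin_form_eliminate_last[OF d])
    then have S: "S = of_int q * lin_form d \<alpha> u + - (of_int (u d) * \<eta>)" by simp
    have "dnint S \<le> dnint (of_int q * lin_form d \<alpha> u) + \<bar>of_int (u d) * \<eta>\<bar>"
      unfolding S using dnint_add_le[of "of_int q * lin_form d \<alpha> u" "- (of_int (u d) * \<eta>)"] by simp
    also have "\<dots> \<le> of_int q * dnint (lin_form d \<alpha> u) + r * \<bar>\<eta>\<bar>"
    proof (rule add_mono)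
      show "dnint (of_int q * lin_form d \<alpha> u) \<le> of_int q * dnint (lin_form d \<alpha> u)"
        using dnint_int_mult_le[of q] pq by simp
      show "\<bar>of_int (u d) * \<eta>\<bar> \<le> r * \<bar>\<eta>\<bar>"
        unfolding abs_mult using ur[of d] d by (intro mult_right_mono) auto
    qed
    also have "\<dots> \<le> (of_int q + r) * \<bar>\<eta>\<bar>"
      using close pq by (simp add: distrib_right mult_left_mono)
    finally have upper: "dnint S \<le> (of_int q + r) * \<bar>\<eta>\<bar>" .
    have "\<bar>real_of_int (v j)\<bar> \<le> 2 * of_int q * r" if j: "j \<in> {1..d-1}" for j
    proof -
      have "\<bar>real_of_int (v j)\<bar> \<le> \<bar>of_int q * of_int (u j)\<bar> + \<bar>of_int p * of_int (u d)\<bar>"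
        unfolding v_def using abs_triangle_ineq[of "real_of_int q * of_int (u j)"] by (cases "j = 1") auto
      also have "\<dots> = of_int q * \<bar>of_int (u j)\<bar> + of_int p * \<bar>of_int (u d)\<bar>"
        using pq by (simp add: abs_mult)
      also have "\<dots> \<le> of_int q * r + of_int q * r"
        using pq j ur[of j] ur[of d] d by (intro add_mono mult_mono) auto
      finally show ?thesis by (simp add: mult_ac)
    qed
    then have norm: "of_int (supnorm (d - 1) v) \<le> 2 * of_int q * r"
      using d by (intro supnorm_le) auto
    have pos: "0 < (2 * of_int q * r) ^ (d - 1)" using pq r by simp
    have "0 \<le> (of_int q + r) * \<bar>\<eta>\<bar> * (2 * of_int q * r) ^ (d - 1)" using pq r by simp
    then have "0 \<le> C" using budget by linarith
    moreover have "0 < supnorm (d - 1) v" using supnorm_ge[OF j\<^sub>0(1), of v] j\<^sub>0(2) by linarith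
    ultimately have "C / (2 * of_int q * r) ^ (d - 1) \<le> C / of_int (supnorm (d - 1) v) ^ (d - 1)"
      using norm pos by (intro divide_left_mono power_mono) auto
    also have "\<dots> \<le> dnint S"
      using bad[unfolded bad_approx_const_def, rule_format, OF True] unfolding S_def .
    also have "\<dots> \<le> (of_int q + r) * \<bar>\<eta>\<bar>" by (fact upper)
    finally have "C \<le> (of_int q + r) * \<bar>\<eta>\<bar> * (2 * of_int q * r) ^ (d - 1)"
      using pos by (simp add: divide_le_eq)
    with budget show ?thesis by simp
  qed
qed

lemma frac_scaled_diff:
  fixes \<sigma> :: real
  assumes "\<sigma> \<in> \<int>"
  shows "frac (\<sigma> * (frac x - frac y)) = frac (\<sigma> * (x - y))"
proof -
  have "\<sigma> * (frac x - frac y) = \<sigma> * (x - y) + \<sigma> * of_int (\<lfloor>y\<rfloor> - \<lfloor>x\<rfloor>)"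
    unfolding frac_def by (simp add: algebra_simps)
  moreover have "\<sigma> * of_int (\<lfloor>y\<rfloor> - \<lfloor>x\<rfloor>) \<in> \<int>" using assms by simp
  ultimately show ?thesis by (simp add: frac_add_int_right)
qed

lemma frac_diff_less:
  assumes "0 < e" "e < frac z"
  shows "frac (z - e) < frac z"
proof -
  have "frac (z - e) = frac (frac z - e)" using frac_add_simps(1)[of z "- e"] by simp
  also have "\<dots> = frac z - e" using assms frac_lt_1[of z] by (intro frac_eq_id) auto
  finally show ?thesis using assms(1) by simp
qed

lemma frac_int_mult_gt:
  fixes k \<sigma> :: int and \<eta> :: real
  assumes "k \<noteq> 0" "k \<noteq> \<sigma>" "\<bar>\<sigma>\<bar> = 1" "0 < of_int \<sigma> * \<eta>" "(\<bar>of_int k\<bar> + 1) * \<bar>\<eta>\<bar> < 1"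
  shows "\<bar>\<eta>\<bar> < frac (of_int k * \<eta>)"
proof (cases "0 < of_int k * \<eta>")
  case True
  \<comment> \<open>k has the sign of \<sigma> but is not \<sigma>, so \<open>\<bar>k\<bar> \<ge> 2\<close>\<close>
  then have "2 \<le> \<bar>k\<bar>" using assms(1-4) by (auto simp: zero_less_mult_iff abs_if split: if_splits)
  then have "2 * \<bar>\<eta>\<bar> \<le> \<bar>of_int k\<bar> * \<bar>\<eta>\<bar>" by (intro mult_right_mono) auto
  moreover have eq: "of_int k * \<eta> = \<bar>of_int k\<bar> * \<bar>\<eta>\<bar>" using True by (simp add: abs_mult[symmetric])
  moreover have "0 < \<bar>\<eta>\<bar>" using assms(4) by auto
  ultimately have "2 * \<bar>\<eta>\<bar> \<le> of_int k * \<eta>" "of_int k * \<eta> < 1"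
    using assms(5) by (auto simp: algebra_simps)
  moreover have "frac (of_int k * \<eta>) = of_int k * \<eta>"
    using True \<open>of_int k * \<eta> < 1\<close> by (intro frac_eq_id) auto
  ultimately show ?thesis using \<open>0 < \<bar>\<eta>\<bar>\<close> by linarith
next
  case False
  then have neg: "of_int k * \<eta> < 0" using assms(1,4) by (auto simp: linorder_not_less order_le_less)
  then have eq: "of_int k * \<eta> = - (\<bar>of_int k\<bar> * \<bar>\<eta>\<bar>)" by (simp add: abs_mult[symmetric])
  then have "frac (of_int k * \<eta>) = 1 - \<bar>of_int k\<bar> * \<bar>\<eta>\<bar>"
    using neg assms(5) by (subst frac_unique_iff) (auto simp: algebra_simps)
  then show ?thesis using assms(5) by (simp add: algebra_simps)
qed

lemma far_from_multiples:
  fixes p q \<sigma> :: int and u :: "nat \<Rightarrow> int"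
  assumes d: "d \<ge> 2" and q: "1 \<le> q" and \<eta>: "\<eta> = lin_form d \<alpha> (approx_vector d p q)"
    and \<sigma>: "\<bar>\<sigma>\<bar> = 1" "0 < of_int \<sigma> * \<eta>"
    and sep: "close_only_multiples d \<alpha> p q r"
    and small: "(r + 1) * \<bar>\<eta>\<bar> < 1"
    and u: "\<And>j. j \<in> {1..d} \<Longrightarrow> \<bar>of_int (u j)\<bar> < r"
    and nonzero: "\<exists>j\<in>{1..d}. u j \<noteq> 0"
    and not_\<sigma>w: "\<exists>j\<in>{1..d}. u j \<noteq> \<sigma> * approx_vector d p q j"
  shows "\<bar>\<eta>\<bar> < frac (lin_form d \<alpha> u)"
proof (cases "\<bar>\<eta>\<bar> < dnint (lin_form d \<alpha> u)")
  case True
  then show ?thesis using dnint_le_frac by (rule less_le_trans)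
next
  case False
  then have "dnint (lin_form d \<alpha> u) \<le> \<bar>lin_form d \<alpha> (approx_vector d p q)\<bar>" unfolding \<eta> by simp
  with sep u obtain k where k: "\<forall>j\<in>{1..d}. u j = k * approx_vector d p q j"
    unfolding close_only_multiples_def by blast
  have "lin_form d \<alpha> u = lin_form d \<alpha> (\<lambda>j. k * approx_vector d p q j)"
    using k by (intro lin_form_cong) auto
  then have L: "lin_form d \<alpha> u = of_int k * \<eta>" unfolding \<eta> lin_form_scale .
  have dd: "d \<in> {1..d}" "approx_vector d p q d = q" using d unfolding approx_vector_def by auto
  have "\<bar>of_int k\<bar> \<le> \<bar>real_of_int k\<bar> * of_int q" using q by (simp add: mult_le_cancel_left1)
  also have "\<dots> = \<bar>of_int (u d)\<bar>" using k dd q by (simp add: abs_mult)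
  also have "\<dots> < r" using u dd by simp
  finally have "(\<bar>of_int k\<bar> + 1) * \<bar>\<eta>\<bar> \<le> (r + 1) * \<bar>\<eta>\<bar>" by (intro mult_right_mono) auto
  with small have "(\<bar>of_int k\<bar> + 1) * \<bar>\<eta>\<bar> < 1" by linarith
  moreover have "k \<noteq> 0" "k \<noteq> \<sigma>" using k nonzero not_\<sigma>w by auto
  ultimately show ?thesis unfolding L using frac_int_mult_gt \<sigma> by blast
qed

lemma scaled_gap_gt:
  fixes p q t \<sigma> :: int
  assumes d: "d \<ge> 2" and pq: "1 \<le> p" "1 \<le> q" and \<eta>: "\<eta> = lin_form d \<alpha> (approx_vector d p q)"
    and \<sigma>: "\<bar>\<sigma>\<bar> = 1" "0 < of_int \<sigma> * \<eta>" and sep: "close_only_multiples d \<alpha> p q r"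
    and small: "(r + 1) * \<bar>\<eta>\<bar> < 1"
    and m: "in_region d r m" and n: "in_region d r (base_point d t)"
    and ne: "frac (lin_form d \<alpha> m) \<noteq> frac (lin_form d \<alpha> (base_point d t))"
  shows "\<bar>\<eta>\<bar> < frac (of_int \<sigma> * (lin_form d \<alpha> m - lin_form d \<alpha> (base_point d t)))"
proof -
  let ?n = "base_point d t"
  have d1: "1 \<in> {1..d}" using d by simp
  have "\<bar>\<eta>\<bar> < frac (lin_form d \<alpha> (\<lambda>j. \<sigma> * (m j - ?n j)))"
  proof (rule far_from_multiples[OF d pq(2) \<eta> \<sigma> sep small])
    show "\<bar>of_int (\<sigma> * (m j - ?n j))\<bar> < r" if "j \<in> {1..d}" for j
      using in_region_diff_bound[OF m n that] \<sigma>(1) by (simp add: abs_mult flip: of_int_abs)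
    show "\<exists>j\<in>{1..d}. \<sigma> * (m j - ?n j) \<noteq> 0"
      using ne \<sigma>(1) lin_form_cong[of d m ?n \<alpha>] by force
    have "0 < m 1" using m d1 unfolding in_region_def by blast
    then have "m 1 - ?n 1 \<noteq> approx_vector d p q 1"
      using pq d unfolding base_point_def approx_vector_def by simp
    then show "\<exists>j\<in>{1..d}. \<sigma> * (m j - ?n j) \<noteq> \<sigma> * approx_vector d p q j"
      using d1 \<sigma>(1) by auto
  qed
  then show ?thesis unfolding lin_form_scale lin_form_diff .
qed

text \<open>If \<open>m\<^sub>d > q\<close>, then \<open>m - w\<close> still lies in the region and, since subtracting \<open>w\<close>
  moves \<open>L\<close> by \<open>\<eta>\<close> against the direction \<open>\<sigma>\<close>, it would be a nearer neighbour.\<close>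
lemma nearest_neighbour_of_base_point:
  fixes p q t \<sigma> :: int
  assumes d: "d \<ge> 2" and indep: "rat_independent d \<alpha>" and pq: "1 \<le> p" "2 * p \<le> q"
    and \<eta>: "\<eta> = lin_form d \<alpha> (approx_vector d p q)"
    and \<sigma>: "\<bar>\<sigma>\<bar> = 1" "0 < of_int \<sigma> * \<eta>"
    and sep: "close_only_multiples d \<alpha> p q r"
    and small: "(r + 1) * \<bar>\<eta>\<bar> < 1"
    and t: "1 \<le> t" "of_int t + 3 \<le> r"
  obtains m where "in_region d r m" "m d \<le> q"
    "frac (of_int \<sigma> * (lin_form d \<alpha> m - lin_form d \<alpha> (base_point d t))) \<in> cyc_gaps (Aset d \<alpha> r)"
proof -
  define n where "n = base_point d t"
  define A where "A = Aset d \<alpha> r"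
  define a where "a = frac (lin_form d \<alpha> n)"
  let ?L = "lin_form d \<alpha>"
  have d1: "1 \<in> {1..d}" "d \<in> {1..d}" using d by auto
  have n_in: "in_region d r n" unfolding n_def using in_region_base_point[OF d t(1)] t(2) by simp
  have A_img: "A = (\<lambda>n. frac (?L n)) ` Collect (in_region d r)"
    unfolding A_def by (rule Aset_eq_image)
  have fin: "finite A" "A \<subseteq> {0..<1}" unfolding A_def by (rule finite_Aset, rule Aset_subset)
  have a: "a \<in> A" unfolding A_img a_def using n_in by auto
  have other: "frac (?L (base_point d (t + 1))) \<in> A" "frac (?L (base_point d (t + 1))) \<noteq> a"
  proof -
    show "frac (?L (base_point d (t + 1))) \<in> A"
      unfolding A_img using in_region_base_point[OF d, of "t + 1" r] t by auto
    show "frac (?L (base_point d (t + 1))) \<noteq> a"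
      using frac_lin_form_eqD[OF indep] d1 unfolding a_def n_def base_point_def by fastforce
  qed
  have \<sigma>': "real_of_int \<sigma> = 1 \<or> real_of_int \<sigma> = -1" using \<sigma>(1) by (auto simp: abs_if split: if_splits)
  obtain b where b: "b \<in> A" "b \<noteq> a" "frac (of_int \<sigma> * (b - a)) \<in> cyc_gaps A"
    and least: "\<And>c. c \<in> A \<Longrightarrow> c \<noteq> a \<Longrightarrow> frac (of_int \<sigma> * (b - a)) \<le> frac (of_int \<sigma> * (c - a))"
    using cyc_gaps_nearest[OF fin a other \<sigma>'] by blast
  obtain m where m: "in_region d r m" "b = frac (?L m)" using b(1) unfolding A_img by auto
  have scaled: "frac (of_int \<sigma> * (frac (?L m') - a)) = frac (of_int \<sigma> * (?L m' - ?L n))" for m'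
    unfolding a_def by (rule frac_scaled_diff) simp
  have "m d \<le> q"
  proof (rule ccontr)
    assume "\<not> m d \<le> q"
    define m' where "m' = (\<lambda>j. m j - approx_vector d p q j)"
    have "in_region d r m'"
      unfolding m'_def using in_region_minus_approx_vector[OF d _ pq(2) m(1)] pq \<open>\<not> m d \<le> q\<close> by simp
    moreover have "frac (?L m') \<noteq> a"
    proof
      assume "frac (?L m') = a"
      then have "m' 1 = n 1" using frac_lin_form_eqD[OF indep] d1 unfolding a_def by blast
      moreover have "0 < m 1" using m(1) d1 unfolding in_region_def by blast
      ultimately show False using pq d unfolding m'_def n_def approx_vector_def base_point_def by simp
    qed
    ultimately have le: "frac (of_int \<sigma> * (b - a)) \<le> frac (of_int \<sigma> * (frac (?L m') - a))"
      using least unfolding A_img by blast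
    have "\<bar>\<eta>\<bar> < frac (of_int \<sigma> * (?L m - ?L n))"
      using scaled_gap_gt[OF d pq(1) _ \<eta> \<sigma> sep small m(1)] n_in b(2) pq unfolding m(2) a_def n_def by simp
    moreover have "\<bar>of_int \<sigma> * \<eta>\<bar> = \<bar>\<eta>\<bar>" using \<sigma>(1) by (simp add: abs_mult flip: of_int_abs)
    ultimately have "frac (of_int \<sigma> * (?L m - ?L n) - of_int \<sigma> * \<eta>) < frac (of_int \<sigma> * (?L m - ?L n))"
      using \<sigma>(2) by (intro frac_diff_less) auto
    moreover have "frac (of_int \<sigma> * (frac (?L m') - a)) = frac (of_int \<sigma> * (?L m - ?L n) - of_int \<sigma> * \<eta>)"
      unfolding scaled by (simp add: m'_def lin_form_diff \<eta> algebra_simps)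
    moreover have "frac (of_int \<sigma> * (b - a)) = frac (of_int \<sigma> * (?L m - ?L n))" unfolding m(2) by (rule scaled)
    ultimately show False using le by linarith
  qed
  moreover have "frac (of_int \<sigma> * (?L m - ?L n)) \<in> cyc_gaps A" using b(3) unfolding m(2) scaled .
  ultimately show ?thesis using that m(1) unfolding A_def n_def by blast
qed

lemma gap_determines_base_point:
  fixes \<sigma> t\<^sub>1 t\<^sub>2 :: int
  assumes d: "d \<ge> 2" and indep: "rat_independent d \<alpha>" and \<sigma>: "\<bar>\<sigma>\<bar> = 1"
    and m: "0 < m\<^sub>1 d" "m\<^sub>1 d \<le> q" "0 < m\<^sub>2 d" "m\<^sub>2 d \<le> q"
    and eq: "frac (of_int \<sigma> * (lin_form d \<alpha> m\<^sub>1 - lin_form d \<alpha> (base_point d t\<^sub>1)))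
           = frac (of_int \<sigma> * (lin_form d \<alpha> m\<^sub>2 - lin_form d \<alpha> (base_point d t\<^sub>2)))"
  shows "\<bar>t\<^sub>1 - t\<^sub>2\<bar> < q"
proof -
  define x where "x = (\<lambda>j. (m\<^sub>1 j - base_point d t\<^sub>1 j) - (m\<^sub>2 j - base_point d t\<^sub>2 j))"
  have "of_int \<sigma> * lin_form d \<alpha> x \<in> \<int>"
    using frac_diff_eq[OF eq] unfolding x_def lin_form_diff frac_eq_0_iff right_diff_distrib .
  then have "of_int \<sigma> * (of_int \<sigma> * lin_form d \<alpha> x) \<in> \<int>" by (rule Ints_mult[OF Ints_of_int])
  moreover have "\<sigma> * \<sigma> = 1" using \<sigma> abs_mult_self_eq[of \<sigma>] by simp
  ultimately have "lin_form d \<alpha> x \<in> \<int>"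
    by (metis mult.assoc mult_1 of_int_1 of_int_mult)
  then have "x d = 0" using lin_form_Ints_imp_zero[OF indep] d by simp
  then have "m\<^sub>1 d - m\<^sub>2 d = t\<^sub>1 - t\<^sub>2" unfolding x_def base_point_def by simp
  with m show ?thesis by linarith
qed

lemma card_cyc_gaps_ge_separated:
  fixes p q \<sigma> :: int
  assumes d: "d \<ge> 2" and indep: "rat_independent d \<alpha>" and pq: "1 \<le> p" "2 * p \<le> q"
    and \<eta>: "\<eta> = lin_form d \<alpha> (approx_vector d p q)"
    and \<sigma>: "\<bar>\<sigma>\<bar> = 1" "0 < of_int \<sigma> * \<eta>"
    and sep: "close_only_multiples d \<alpha> p q r"
    and small: "(r + 1) * \<bar>\<eta>\<bar> < 1"
    and r: "of_int q + 4 \<le> r"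
  shows "(r - 4) / of_int q \<le> real (card (cyc_gaps (Aset d \<alpha> r)))"
proof -
  have q: "(1::real) \<le> of_int q" using pq by simp
  define J where "J = nat \<lfloor>(r - 4) / of_int q\<rfloor> + 1"
  define t where "t = (\<lambda>k::nat. 1 + int k * q)"
  have t: "1 \<le> t k" "of_int (t k) + 3 \<le> r" if "k \<in> {..<J}" for k
  proof -
    show "1 \<le> t k" unfolding t_def using pq by simp
    have "0 \<le> (r - 4) / of_int q" using r q by simp
    then have "int k \<le> \<lfloor>(r - 4) / of_int q\<rfloor>" using that unfolding J_def lessThan_iff by linarith
    then have "real k \<le> (r - 4) / of_int q" by (simp add: le_floor_iff)
    then have "real k * of_int q \<le> r - 4" using q by (simp add: le_divide_eq)
    then show "of_int (t k) + 3 \<le> r" unfolding t_def by simp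
  qed
  define gap where "gap = (\<lambda>k m. frac (of_int \<sigma> * (lin_form d \<alpha> m - lin_form d \<alpha> (base_point d (t k)))))"
  have "\<forall>k\<in>{..<J}. \<exists>m. in_region d r m \<and> m d \<le> q \<and> gap k m \<in> cyc_gaps (Aset d \<alpha> r)"
    using nearest_neighbour_of_base_point[OF d indep pq \<eta> \<sigma> sep small t] unfolding gap_def by metis
  then obtain M
    where M: "\<forall>k\<in>{..<J}. in_region d r (M k) \<and> M k d \<le> q \<and> gap k (M k) \<in> cyc_gaps (Aset d \<alpha> r)"
    by (metis bchoice)
  have "inj_on (\<lambda>k. gap k (M k)) {..<J}"
  proof (rule inj_onI)
    fix k\<^sub>1 k\<^sub>2 assume k: "k\<^sub>1 \<in> {..<J}" "k\<^sub>2 \<in> {..<J}" and eq: "gap k\<^sub>1 (M k\<^sub>1) = gap k\<^sub>2 (M k\<^sub>2)"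
    have "0 < M k d \<and> M k d \<le> q" if "k \<in> {..<J}" for k
      using M[rule_format, OF that] d unfolding in_region_def by auto
    then have "\<bar>t k\<^sub>1 - t k\<^sub>2\<bar> < q"
      using gap_determines_base_point[OF d indep \<sigma>(1), of "M k\<^sub>1" q "M k\<^sub>2"] eq k unfolding gap_def by blast
    then have "\<bar>int k\<^sub>1 - int k\<^sub>2\<bar> * q < 1 * q" unfolding t_def using pq by (simp add: abs_mult left_diff_distrib[symmetric])
    then have "\<bar>int k\<^sub>1 - int k\<^sub>2\<bar> < 1" using pq by (simp add: mult_less_cancel_right)
    then show "k\<^sub>1 = k\<^sub>2" by simp
  qed
  then have "card {..<J} \<le> card (cyc_gaps (Aset d \<alpha> r))"
    using M by (intro card_inj_on_le finite_cyc_gaps finite_Aset) auto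
  moreover have "(r - 4) / of_int q \<le> real J" unfolding J_def using r q by linarith
  ultimately show ?thesis by simp
qed

lemma budget_imp_small:
  fixes q r \<eta> C :: real
  assumes "1 \<le> q" "q + 4 \<le> r" "(q + r) * \<bar>\<eta>\<bar> * (2 * q * r) ^ k < C" "C \<le> 1/2"
  shows "(r + 1) * \<bar>\<eta>\<bar> < 1"
proof -
  have "1 * 1 \<le> q * r" using assms(1,2) by (intro mult_mono) auto
  then have "1 \<le> (2 * q * r) ^ k" by (intro one_le_power) simp
  moreover have "0 \<le> (q + r) * \<bar>\<eta>\<bar>" using assms(1,2) by simp
  ultimately have "(q + r) * \<bar>\<eta>\<bar> \<le> (q + r) * \<bar>\<eta>\<bar> * (2 * q * r) ^ k"
    using mult_left_mono by fastforce
  moreover have "(r + 1) * \<bar>\<eta>\<bar> \<le> (q + r) * \<bar>\<eta>\<bar>" using assms(1) by (intro mult_right_mono) auto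
  ultimately show ?thesis using assms(3,4) by linarith
qed

lemma card_cyc_gaps_ge:
  fixes p q :: int
  assumes d: "d \<ge> 2" and indep: "rat_independent d \<alpha>" and bad: "bad_approx_const (d - 1) \<alpha> C"
    and pq: "1 \<le> p" "2 * p \<le> q" "coprime p q"
    and \<eta>: "\<eta> = of_int q * \<alpha> d - of_int p * \<alpha> 1"
    and budget: "(of_int q + r) * \<bar>\<eta>\<bar> * (2 * of_int q * r) ^ (d - 1) < C"
    and r: "of_int q + 4 \<le> r"
  shows "(r - 4) / of_int q \<le> real (card (cyc_gaps (Aset d \<alpha> r)))"
proof -
  have \<eta>_L: "\<eta> = lin_form d \<alpha> (approx_vector d p q)"
    unfolding \<eta> by (rule lin_form_approx_vector[OF d, symmetric])
  have "\<eta> \<noteq> 0"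
  proof
    assume "\<eta> = 0"
    then have "approx_vector d p q d = 0"
      using lin_form_Ints_imp_zero[OF indep, of "approx_vector d p q"] \<eta>_L d by simp
    then show False using pq d unfolding approx_vector_def by simp
  qed
  define \<sigma> :: int where "\<sigma> = (if \<eta> > 0 then 1 else -1)"
  have \<sigma>: "\<bar>\<sigma>\<bar> = 1" "0 < of_int \<sigma> * \<eta>"
    unfolding \<sigma>_def using \<open>\<eta> \<noteq> 0\<close> by (auto simp: mult_less_0_iff)
  have "close_only_multiples d \<alpha> p q r"
    using close_points_are_multiples[OF d bad pq(1) _ pq(3) \<eta> budget] pq by simp
  moreover have "(r + 1) * \<bar>\<eta>\<bar> < 1"
    using budget_imp_small[OF _ r budget] bad_approx_const_le_half[OF _ bad] pq d by simp
  ultimately show ?thesis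
    using card_cyc_gaps_ge_separated[OF d indep pq(1,2) \<eta>_L \<sigma>] r by blast
qed

lemma approximation_from_Eset:
  fixes \<beta> E B :: real
  assumes \<beta>: "\<beta> \<in> Eset (\<lambda>q. real q powr - E) \<inter> {0<..<1/2}" and E: "1 \<le> E"
  obtains p q :: int where "B < of_int q" "1 \<le> p" "2 * p \<le> q"
    "\<bar>of_int q * \<beta> - of_int p\<bar> \<le> of_int q powr - E"
proof -
  have "infinite {n::int. dnint (of_int n * \<beta>) \<le> real (nat \<bar>n\<bar>) powr - E}"
    using \<beta> unfolding Eset_def by auto
  then obtain n :: int where n: "\<bar>n\<bar> > \<lceil>max B (max (1 / \<beta>) 4)\<rceil>"
      "dnint (of_int n * \<beta>) \<le> real (nat \<bar>n\<bar>) powr - E"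
    unfolding infinite_int_iff_unbounded by (metis (mono_tags, lifting) mem_Collect_eq)
  define q where "q = \<bar>n\<bar>"
  define Q where "Q = real_of_int q"
  have "max B (max (1 / \<beta>) 4) \<le> of_int \<lceil>max B (max (1 / \<beta>) 4)\<rceil>" by (rule le_of_int_ceiling)
  also have "\<dots> < Q" unfolding Q_def q_def using n(1) by (simp only: of_int_less_iff)
  finally have Q: "B < Q" "1 / \<beta> < Q" "4 < Q" by auto
  have \<beta>: "0 < \<beta>" "\<beta> < 1 / 2" using \<beta> by auto
  have \<beta>Q: "1 < Q * \<beta>" using Q(2) \<beta>(1) by (simp add: divide_less_eq)
  have "Q * \<beta> < Q * (1 / 2)" using Q(3) \<beta>(2) by (intro mult_strict_left_mono) auto
  then have \<beta>Q': "Q * \<beta> < Q / 2" by simp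
  have "dnint (Q * \<beta>) = dnint (of_int n * \<beta>)"
    unfolding Q_def q_def using dnint_minus[of "of_int n * \<beta>"] by (cases "n \<ge> 0") auto
  also have "\<dots> \<le> Q powr - E" using n(2) unfolding Q_def q_def by simp
  finally have close: "\<bar>Q * \<beta> - of_int (round (Q * \<beta>))\<bar> \<le> Q powr - E" unfolding dnint_def .
  have "Q powr - E \<le> Q powr - 1" using E Q(3) by (intro powr_mono) auto
  also have "\<dots> < 1 / 4" using Q(3) by (simp add: powr_minus_divide)
  finally have "Q powr - E < 1 / 4" .
  then have "1 \<le> round (Q * \<beta>)" "2 * round (Q * \<beta>) \<le> q"
    using close \<beta>Q \<beta>Q' unfolding Q_def by linarith+
  with that Q(1) close show ?thesis unfolding Q_def by (simp add: mult.commute)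
qed

lemma reduce_fraction:
  fixes p\<^sub>0 q\<^sub>0 :: int
  assumes p\<^sub>0: "1 \<le> p\<^sub>0" "2 * p\<^sub>0 \<le> q\<^sub>0"
  obtains p q g where "p\<^sub>0 = p * g" "q\<^sub>0 = q * g" "1 \<le> g" "1 \<le> p" "2 * p \<le> q" "coprime p q"
proof -
  define g where "g = gcd p\<^sub>0 q\<^sub>0"
  define p where "p = p\<^sub>0 div g"
  define q where "q = q\<^sub>0 div g"
  have g: "1 \<le> g" unfolding g_def using p\<^sub>0 by (simp add: int_one_le_iff_zero_less)
  have pg: "p\<^sub>0 = p * g" and qg: "q\<^sub>0 = q * g" unfolding p_def q_def g_def by simp_all
  have "coprime p q" unfolding p_def q_def g_def using p\<^sub>0 by (intro div_gcd_coprime) auto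
  moreover have "1 \<le> p"
  proof (rule ccontr)
    assume "\<not> 1 \<le> p"
    then have "p * g \<le> 0" using g by (simp add: mult_nonpos_nonneg)
    then show False using p\<^sub>0 pg by simp
  qed
  moreover have "2 * p \<le> q"
    using p\<^sub>0(2) g unfolding pg qg by (simp add: mult.assoc[symmetric] mult_le_cancel_right)
  ultimately show ?thesis using that pg qg g by blast
qed

lemma coprime_approximation_from_Eset:
  fixes \<beta> E B :: real
  assumes \<beta>: "\<beta> \<in> Eset (\<lambda>q. real q powr - E) \<inter> {0<..<1/2}" and E: "1 \<le> E"
  obtains p q :: int and Q :: real
  where "B < Q" "1 \<le> p" "2 * p \<le> q" "coprime p q" "of_int q \<le> Q"
    "\<bar>of_int q * \<beta> - of_int p\<bar> \<le> Q powr - E"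
proof -
  obtain p\<^sub>0 q\<^sub>0 :: int where pq\<^sub>0: "B < of_int q\<^sub>0" "1 \<le> p\<^sub>0" "2 * p\<^sub>0 \<le> q\<^sub>0"
    and close: "\<bar>of_int q\<^sub>0 * \<beta> - of_int p\<^sub>0\<bar> \<le> of_int q\<^sub>0 powr - E"
    using approximation_from_Eset[OF \<beta> E] by blast
  obtain p q g where pqg: "p\<^sub>0 = p * g" "q\<^sub>0 = q * g" "1 \<le> g" "1 \<le> p" "2 * p \<le> q" "coprime p q"
    using reduce_fraction[OF pq\<^sub>0(2,3)] by blast
  have "q * 1 \<le> q * g" using pqg by (intro mult_left_mono) auto
  then have "of_int q \<le> real_of_int q\<^sub>0" unfolding pqg(2) of_int_le_iff by simp
  moreover have "\<bar>of_int q * \<beta> - of_int p\<bar> \<le> \<bar>of_int q\<^sub>0 * \<beta> - of_int p\<^sub>0\<bar>"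
  proof -
    have "\<bar>of_int q * \<beta> - of_int p\<bar> * 1 \<le> \<bar>of_int q * \<beta> - of_int p\<bar> * of_int g"
      using pqg(3) by (intro mult_left_mono) auto
    also have "\<dots> = \<bar>(of_int q * \<beta> - of_int p) * of_int g\<bar>" using pqg(3) by (simp add: abs_mult)
    also have "\<dots> = \<bar>of_int q\<^sub>0 * \<beta> - of_int p\<^sub>0\<bar>" unfolding pqg(1,2) by (simp add: algebra_simps)
    finally show ?thesis by simp
  qed
  ultimately show ?thesis using that[of "of_int q\<^sub>0"] pq\<^sub>0(1) pqg(4-6) close by force
qed

lemma approximation_budget:
  fixes q Q r e \<kappa> \<epsilon> :: real
  assumes d: "d \<ge> 2" and q: "1 \<le> q" "q \<le> Q" and r: "2 * Q \<le> r" "r = \<kappa> * Q powr (1 + \<epsilon> / d)"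
    and \<kappa>: "0 < \<kappa>" and e: "0 \<le> e" "e \<le> Q powr - (2 * real d - 1 + \<epsilon>)"
  shows "(q + r) * e * (2 * q * r) ^ (d - 1) \<le> (2 * \<kappa>) ^ d"
proof -
  have Q: "0 < Q" using q by simp
  have d_eq: "d = Suc (d - 1)" using d by simp
  have "(q + r) * e * (2 * q * r) ^ (d - 1) \<le> (2 * r) * Q powr - (2 * real d - 1 + \<epsilon>) * (2 * Q * r) ^ (d - 1)"
    using q r e Q by (intro mult_mono power_mono) auto
  also have "\<dots> = 2 ^ d * Q powr - (2 * real d - 1 + \<epsilon>) * Q ^ (d - 1) * r ^ d"
    by (subst (1 2) d_eq) (simp add: power_mult_distrib algebra_simps)
  also have "r ^ d = \<kappa> ^ d * Q powr (real d + \<epsilon>)"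
  proof -
    have "(1 + \<epsilon> / d) * real d = real d + \<epsilon>" using d by (simp add: field_simps)
    then show ?thesis using Q unfolding r(2) by (simp add: power_mult_distrib powr_power mult.commute)
  qed
  also have "Q ^ (d - 1) = Q powr (real d - 1)" using Q d by (simp add: powr_realpow[symmetric] of_nat_diff)
  also have "2 ^ d * Q powr - (2 * real d - 1 + \<epsilon>) * Q powr (real d - 1) * (\<kappa> ^ d * Q powr (real d + \<epsilon>))
      = (2 * \<kappa>) ^ d * Q powr (- (2 * real d - 1 + \<epsilon>) + (real d - 1) + (real d + \<epsilon>))"
    by (simp only: powr_add power_mult_distrib mult_ac)
  also have "- (2 * real d - 1 + \<epsilon>) + (real d - 1) + (real d + \<epsilon>) = 0" by simp
  finally show ?thesis using Q by simp
qed

lemma scale_powr_identity: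
  fixes \<kappa> Q \<epsilon> :: real
  assumes "0 < \<kappa>" "0 < Q" "d > 0" "0 < \<epsilon>"
  shows "\<kappa> powr (d / (d + \<epsilon>)) * (\<kappa> * Q powr (1 + \<epsilon> / d)) powr (\<epsilon> / (d + \<epsilon>)) = \<kappa> * Q powr (\<epsilon> / d)"
proof -
  have "1 + \<epsilon> / d = (d + \<epsilon>) / d" using assms by (simp add: field_simps)
  then have "(1 + \<epsilon> / d) * (\<epsilon> / (d + \<epsilon>)) = \<epsilon> / d" using assms by simp
  moreover have "d / (d + \<epsilon>) + \<epsilon> / (d + \<epsilon>) = 1" using assms by (simp add: add_divide_distrib[symmetric])
  ultimately show ?thesis
    using assms by (simp add: powr_mult powr_powr powr_add[symmetric] mult.assoc[symmetric])
qed

lemma many_gaps_at_scale: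
  fixes p q :: int and Q \<kappa> \<epsilon> :: real
  assumes d: "d \<ge> 2" and indep: "rat_independent d \<alpha>" and bad: "bad_approx_const (d - 1) \<alpha> C"
    and pq: "1 \<le> p" "2 * p \<le> q" "coprime p q" "of_int q \<le> Q"
    and approx: "\<bar>of_int q * (\<alpha> d / \<alpha> 1) - of_int p\<bar> \<le> Q powr - (2 * real d - 1 + \<epsilon>)"
    and \<alpha>\<^sub>1: "\<alpha> 1 \<noteq> 0" and \<kappa>: "0 < \<kappa>" "2 * \<bar>\<alpha> 1\<bar> * (2 * \<kappa>) ^ d = C"
    and Q: "4 < Q" "2 \<le> \<kappa> * Q powr (\<epsilon> / d)"
  shows "\<kappa> * Q powr (\<epsilon> / d) / 2 < card (cyc_gaps (Aset d \<alpha> (\<kappa> * Q powr (1 + \<epsilon> / d))))"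
proof -
  define r where "r = \<kappa> * Q powr (1 + \<epsilon> / d)"
  define \<eta> where "\<eta> = of_int q * \<alpha> d - of_int p * \<alpha> 1"
  have q: "1 \<le> real_of_int q" using pq by simp
  have r_eq: "r = Q * (\<kappa> * Q powr (\<epsilon> / d))"
    unfolding r_def using Q by (simp add: powr_add)
  then have r: "2 * Q \<le> r" using Q by simp
  have "\<eta> = \<alpha> 1 * (of_int q * (\<alpha> d / \<alpha> 1) - of_int p)" unfolding \<eta>_def using \<alpha>\<^sub>1 by (simp add: field_simps)
  then have "\<bar>\<eta>\<bar> / \<bar>\<alpha> 1\<bar> \<le> Q powr - (2 * real d - 1 + \<epsilon>)" using approx \<alpha>\<^sub>1 by (simp add: abs_mult)
  then have "(of_int q + r) * (\<bar>\<eta>\<bar> / \<bar>\<alpha> 1\<bar>) * (2 * of_int q * r) ^ (d - 1) \<le> (2 * \<kappa>) ^ d"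
    by (intro approximation_budget[OF d q pq(4) r r_def \<kappa>(1)]) simp_all
  then have "(of_int q + r) * \<bar>\<eta>\<bar> * (2 * of_int q * r) ^ (d - 1) \<le> C / 2"
    using \<alpha>\<^sub>1 \<kappa>(2) by (simp add: field_simps)
  also have "\<dots> < C" using \<kappa> \<alpha>\<^sub>1 by auto
  finally have "(r - 4) / of_int q \<le> card (cyc_gaps (Aset d \<alpha> r))"
    using card_cyc_gaps_ge[OF d indep bad pq(1-3) \<eta>_def] r pq(4) Q by simp
  moreover have "(r - 4) / Q \<le> (r - 4) / of_int q"
    using r pq(4) q Q by (intro divide_left_mono) auto
  moreover have "(r - 4) / Q = \<kappa> * Q powr (\<epsilon> / d) - 4 / Q" unfolding r_eq using Q by (simp add: field_simps)
  moreover have "4 / Q < 1" using Q by simp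
  ultimately show ?thesis using Q(2) unfolding r_def by linarith
qed

lemma many_gaps_beyond:
  fixes \<kappa> \<epsilon> R :: real
  assumes d: "d \<ge> 2" and \<epsilon>: "0 < \<epsilon>" and indep: "rat_independent d \<alpha>"
    and bad: "bad_approx_const (d - 1) \<alpha> C"
    and \<beta>: "\<alpha> d / \<alpha> 1 \<in> Eset (\<lambda>q. real q powr (- (2 * real d - 1 + \<epsilon>))) \<inter> {0<..<1/2}"
    and \<kappa>: "0 < \<kappa>" "2 * \<bar>\<alpha> 1\<bar> * (2 * \<kappa>) ^ d = C"
  shows "\<exists>r>R. r > 0 \<and>
    \<kappa> powr (d / (d + \<epsilon>)) / 2 * r powr (\<epsilon> / (d + \<epsilon>)) < card (cyc_gaps (Aset d \<alpha> r))"
proof -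
  have \<alpha>\<^sub>1: "\<alpha> 1 \<noteq> 0" using \<beta> by auto
  obtain p q :: int and Q :: real where pq: "max R (max 4 ((2 / \<kappa>) powr (d / \<epsilon>))) < Q"
    "1 \<le> p" "2 * p \<le> q" "coprime p q" "of_int q \<le> Q"
    "\<bar>of_int q * (\<alpha> d / \<alpha> 1) - of_int p\<bar> \<le> Q powr - (2 * real d - 1 + \<epsilon>)"
    by (rule coprime_approximation_from_Eset[OF \<beta>]) (use d \<epsilon> in simp)
  define r where "r = \<kappa> * Q powr (1 + \<epsilon> / d)"
  have "2 / \<kappa> = ((2 / \<kappa>) powr (d / \<epsilon>)) powr (\<epsilon> / d)" using \<kappa> d \<epsilon> by (simp add: powr_powr)
  also have "\<dots> \<le> Q powr (\<epsilon> / d)" using pq(1) \<epsilon> by (intro powr_mono2) auto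
  finally have large: "2 \<le> \<kappa> * Q powr (\<epsilon> / d)" using \<kappa> by (simp add: field_simps)
  have "\<kappa> powr (d / (d + \<epsilon>)) / 2 * r powr (\<epsilon> / (d + \<epsilon>)) = \<kappa> * Q powr (\<epsilon> / d) / 2"
    unfolding r_def using scale_powr_identity[of \<kappa> Q d \<epsilon>] \<kappa> pq(1) d \<epsilon> by simp
  also have "\<dots> < card (cyc_gaps (Aset d \<alpha> r))"
    unfolding r_def using many_gaps_at_scale[OF d indep bad pq(2-6) \<alpha>\<^sub>1 \<kappa>] pq(1) large by simp
  moreover have "Q * 2 \<le> Q * (\<kappa> * Q powr (\<epsilon> / d))" using large pq(1) by (intro mult_left_mono) auto
  then have "2 * Q \<le> r" unfolding r_def using pq(1) by (simp add: powr_add mult_ac)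
  ultimately show ?thesis using pq(1) by (intro exI[of _ r]) auto
qed

theorem lemma6p1:
  fixes d :: nat and \<epsilon> :: real and \<alpha> :: "nat \<Rightarrow> real"
  assumes "d \<ge> 2" and "\<epsilon> > 0"
    and "\<alpha> \<in> Bad_lin (d - 1)"
    and "\<alpha> d / \<alpha> 1 \<in> Eset (\<lambda>q. real q powr (- (2 * real d - 1 + \<epsilon>))) \<inter> {0<..<1/2}"
    and "\<And>(c0::rat) (c::nat \<Rightarrow> rat).
           of_rat c0 + (\<Sum>j=1..d. of_rat (c j) * \<alpha> j) = 0 \<Longrightarrow> c0 = 0 \<and> (\<forall>j\<in>{1..d}. c j = 0)"
  shows "\<exists>C>0. \<forall>R. \<exists>r>R. r > 0 \<and>
           real (card (cyc_gaps (Aset d \<alpha> r))) > C * r powr (\<epsilon> / (real d + \<epsilon>))"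
proof -
  have indep: "rat_independent d \<alpha>" using assms(5) unfolding rat_independent_def by blast
  obtain C\<^sub>B where C\<^sub>B: "0 < C\<^sub>B" "bad_approx_const (d - 1) \<alpha> C\<^sub>B" using assms(3) Bad_lin_iff by blast
  have "\<alpha> 1 \<noteq> 0" using assms(4) by auto
  define \<kappa> where "\<kappa> = (C\<^sub>B / (2 * \<bar>\<alpha> 1\<bar>)) powr (1 / d) / 2"
  have \<kappa>: "0 < \<kappa>" "2 * \<bar>\<alpha> 1\<bar> * (2 * \<kappa>) ^ d = C\<^sub>B"
    unfolding \<kappa>_def using C\<^sub>B \<open>\<alpha> 1 \<noteq> 0\<close> assms(1) by (simp_all add: powr_power)
  show ?thesis
    by (rule exI[of _ "\<kappa> powr (d / (d + \<epsilon>)) / 2"], intro conjI allI)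
      (use \<kappa> in simp, use many_gaps_beyond[OF assms(1,2) indep C\<^sub>B(2) assms(4) \<kappa>] in blast)
qed

end
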